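(* Let $A$ be a $J^*$-algebra and let $r>1$. Let $T : A \to A$ be a mapping satisfying $T(rx)=rT(x)$ for all $x\in A$, and suppose there exists a function $\varphi: A\times A\times A\to [0, \infty)$ such that $$\lim_{n\to\infty} r^{-n}\varphi(r^n x, r^n y, r^n z)=0 \quad\text{for all } x,y,z\in A,$$ and $$\|T(\lambda x+y+zz^*z)-\lambda T(x)-T(y)-T(z)T(z)^*T(z)\|\leq\varphi(x, y, z)$$ for all $\lambda \in \mathbb{C}$ and all $x, y, z\in A$. Then $T$ is a $J^*$-homomorphism.
   Context: A $J^*$-algebra is a norm-closed complex linear subspace $A$ of a $C^*$-algebra such that $xx^*x\in A$ whenever $x\in A$ (with the norm, involution and product inherited from the ambient $C^*$-algebra). For $J^*$-algebras $A$ and $B$, a $J^*$-homomorphism is a $\mathbb{C}$-linear mapping $T : A \to B$ such that $T(xx^*x)=T(x)T(x)^*T(x)$ for all $x\in A$. *)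

theory Defs
  imports "HOL-Analysis.Analysis"
begin

text \<open>An ambient C*-algebra is
  modelled as a Banach algebra type (over the reals) together with an explicit complex scalar
  multiplication cs extending the real one, and an involution star, subject to the C*-axioms.\<close>

definition cstar_algebra ::
  "(complex \<Rightarrow> 'a::{real_normed_algebra,banach} \<Rightarrow> 'a) \<Rightarrow> ('a \<Rightarrow> 'a) \<Rightarrow> bool" where
  "cstar_algebra cs star \<longleftrightarrow>
     (\<forall>x. cs 1 x = x) \<and>
     (\<forall>a b x. cs (a * b) x = cs a (cs b x)) \<and>
     (\<forall>a b x. cs (a + b) x = cs a x + cs b x) \<and>
     (\<forall>a x y. cs a (x + y) = cs a x + cs a y) \<and>
     (\<forall>t x. cs (complex_of_real t) x = scaleR t x) \<and>
     (\<forall>a x. norm (cs a x) = cmod a * norm x) \<and>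
     (\<forall>a x y. cs a (x * y) = cs a x * y) \<and>
     (\<forall>a x y. cs a (x * y) = x * cs a y) \<and>
     (\<forall>x. star (star x) = x) \<and>
     (\<forall>x y. star (x + y) = star x + star y) \<and>
     (\<forall>a x. star (cs a x) = cs (cnj a) (star x)) \<and>
     (\<forall>x y. star (x * y) = star y * star x) \<and>
     (\<forall>x. norm (star x * x) = (norm x)\<^sup>2)"

definition jstar_algebra ::
  "(complex \<Rightarrow> 'a::{real_normed_algebra,banach} \<Rightarrow> 'a) \<Rightarrow> ('a \<Rightarrow> 'a) \<Rightarrow> 'a set \<Rightarrow> bool" where
  "jstar_algebra cs star A \<longleftrightarrow>
     cstar_algebra cs star \<and> closed A \<and> 0 \<in> A \<and>
     (\<forall>x\<in>A. \<forall>y\<in>A. x + y \<in> A) \<and>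
     (\<forall>a. \<forall>x\<in>A. cs a x \<in> A) \<and>
     (\<forall>x\<in>A. x * star x * x \<in> A)"

definition jstar_hom ::
  "(complex \<Rightarrow> 'a::{real_normed_algebra,banach} \<Rightarrow> 'a) \<Rightarrow> ('a \<Rightarrow> 'a) \<Rightarrow> 'a set \<Rightarrow> 'a set
     \<Rightarrow> ('a \<Rightarrow> 'a) \<Rightarrow> bool" where
  "jstar_hom cs star A B T \<longleftrightarrow>
     (\<forall>x\<in>A. T x \<in> B) \<and>
     (\<forall>x\<in>A. \<forall>y\<in>A. T (x + y) = T x + T y) \<and>
     (\<forall>a. \<forall>x\<in>A. T (cs a x) = cs a (T x)) \<and>
     (\<forall>x\<in>A. T (x * star x * x) = T x * star (T x) * T x)"

end

theory Submission
  imports Defs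
begin

text \<open>Substituting r^n x, r^n y, r^n z into the approximation inequality and using
  T(r^n x) = r^n T(x), each of the three defects of T (additivity, complex homogeneity,
  preservation of x x* x) gets multiplied by at least r^n, while the bound only grows
  like o(r^n); hence every defect vanishes.\<close>

lemma cstar_algebra_cs_one:
  assumes "cstar_algebra cs star"
  shows "cs 1 x = x"
  using assms by (simp add: cstar_algebra_def)

lemma cstar_algebra_cs_zero:
  assumes "cstar_algebra cs star"
  shows "cs c 0 = 0"
proof -
  have "norm (cs c 0) = 0"
    using assms unfolding cstar_algebra_def by (metis mult_zero_right norm_zero)
  then show ?thesis by simp
qed

lemma cstar_algebra_cs_scaleR:
  assumes "cstar_algebra cs star"
  shows "cs c (t *\<^sub>R x) = t *\<^sub>R cs c x"
proof -
  have csR: "\<And>t x. cs (complex_of_real t) x = t *\<^sub>R x"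
    and csmul: "\<And>a b x. cs (a * b) x = cs a (cs b x)"
    using assms unfolding cstar_algebra_def by auto
  have "cs c (t *\<^sub>R x) = cs (c * complex_of_real t) x" by (simp add: csmul csR)
  also have "\<dots> = cs (complex_of_real t * c) x" by (simp add: mult.commute)
  also have "\<dots> = t *\<^sub>R cs c x" by (simp add: csmul csR)
  finally show ?thesis .
qed

lemma cstar_algebra_star_scaleR:
  assumes "cstar_algebra cs star"
  shows "star (t *\<^sub>R x) = t *\<^sub>R star x"
  using assms unfolding cstar_algebra_def by (metis complex_cnj_complex_of_real)

lemma triple_product_scaleR:
  fixes x :: "'a::real_normed_algebra"
  assumes "\<And>t x. star (t *\<^sub>R x) = t *\<^sub>R star x"
  shows "(t *\<^sub>R x) * star (t *\<^sub>R x) * (t *\<^sub>R x) = t ^ 3 *\<^sub>R (x * star x * x)"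
  by (simp add: assms power3_eq_cube)

lemma jstar_algebra_scaleR_closed:
  assumes "jstar_algebra cs star A" "x \<in> A"
  shows "t *\<^sub>R x \<in> A"
  using assms unfolding jstar_algebra_def cstar_algebra_def by metis

lemma eq_0_if_power_scaled_norm_le_vanishing:
  fixes d :: "'a::real_normed_vector"
  assumes "r > 0" "\<And>n. r ^ n * norm d \<le> g n" "(\<lambda>n. g n / r ^ n) \<longlonglongrightarrow> 0"
  shows "d = 0"
proof -
  have "norm d \<le> g n / r ^ n" for n
    using assms(1) assms(2)[of n] by (simp add: field_simps)
  then have "norm d \<le> 0"
    by (intro LIMSEQ_le_const[OF assms(3)]) auto
  then show ?thesis by simp
qed

locale jstar_approx_hom =
  fixes cs :: "complex \<Rightarrow> 'a::{real_normed_algebra,banach} \<Rightarrow> 'a"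
    and star :: "'a \<Rightarrow> 'a"
    and A :: "'a set"
    and r :: real
    and T :: "'a \<Rightarrow> 'a"
    and \<phi> :: "'a \<Rightarrow> 'a \<Rightarrow> 'a \<Rightarrow> real"
  assumes jstar_algebra: "jstar_algebra cs star A"
    and r_gt_1: "r > 1"
    and T_scaleR_r: "\<And>x. x \<in> A \<Longrightarrow> T (r *\<^sub>R x) = r *\<^sub>R T x"
    and phi_lim: "\<And>x y z. x \<in> A \<Longrightarrow> y \<in> A \<Longrightarrow> z \<in> A \<Longrightarrow>
         (\<lambda>n. \<phi> (r ^ n *\<^sub>R x) (r ^ n *\<^sub>R y) (r ^ n *\<^sub>R z) / r ^ n) \<longlonglongrightarrow> 0"
    and approx: "\<And>c x y z. x \<in> A \<Longrightarrow> y \<in> A \<Longrightarrow> z \<in> A \<Longrightarrow>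
         norm (T (cs c x + y + z * star z * z) - cs c (T x) - T y - T z * star (T z) * T z)
           \<le> \<phi> x y z"
begin

lemma ambient_cstar: "cstar_algebra cs star"
  using jstar_algebra unfolding jstar_algebra_def by blast

lemma zero_mem: "0 \<in> A"
  and add_mem: "x \<in> A \<Longrightarrow> y \<in> A \<Longrightarrow> x + y \<in> A"
  and cs_mem: "x \<in> A \<Longrightarrow> cs c x \<in> A"
  and triple_mem: "x \<in> A \<Longrightarrow> x * star x * x \<in> A"
  using jstar_algebra unfolding jstar_algebra_def by blast+

lemma scaleR_mem: "x \<in> A \<Longrightarrow> t *\<^sub>R x \<in> A"
  using jstar_algebra by (rule jstar_algebra_scaleR_closed)

lemma T_zero: "T 0 = 0"
proof -
  have "T 0 = r *\<^sub>R T 0"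
    using T_scaleR_r[OF zero_mem] by simp
  then have "(r - 1) *\<^sub>R T 0 = 0" by (simp add: algebra_simps)
  then show ?thesis using r_gt_1 by simp
qed

lemma T_scaleR_power: "x \<in> A \<Longrightarrow> T (r ^ n *\<^sub>R x) = r ^ n *\<^sub>R T x"
proof (induction n)
  case (Suc n)
  have "T (r ^ Suc n *\<^sub>R x) = T (r *\<^sub>R (r ^ n *\<^sub>R x))" by simp
  also have "\<dots> = r *\<^sub>R T (r ^ n *\<^sub>R x)" using T_scaleR_r scaleR_mem Suc.prems by blast
  also have "\<dots> = r ^ Suc n *\<^sub>R T x" using Suc by simp
  finally show ?case .
qed simp

lemma defect_eq_0:
  assumes "x \<in> A" "y \<in> A" "z \<in> A"
    and "\<And>n. r ^ n * norm d \<le> \<phi> (r ^ n *\<^sub>R x) (r ^ n *\<^sub>R y) (r ^ n *\<^sub>R z)"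
  shows "d = 0"
  using r_gt_1 assms(4) phi_lim[OF assms(1-3)]
  by (intro eq_0_if_power_scaled_norm_le_vanishing) auto

lemma T_add:
  assumes "x \<in> A" "y \<in> A"
  shows "T (x + y) = T x + T y"
proof -
  have "T (x + y) - T x - T y = 0"
  proof (rule defect_eq_0[OF assms zero_mem])
    fix n
    have "norm (T (r ^ n *\<^sub>R x + r ^ n *\<^sub>R y) - T (r ^ n *\<^sub>R x) - T (r ^ n *\<^sub>R y))
        \<le> \<phi> (r ^ n *\<^sub>R x) (r ^ n *\<^sub>R y) 0"
      using approx[of "r ^ n *\<^sub>R x" "r ^ n *\<^sub>R y" 0 1] assms
      by (simp add: scaleR_mem zero_mem T_zero cstar_algebra_cs_one[OF ambient_cstar])
    then show "r ^ n * norm (T (x + y) - T x - T y)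
        \<le> \<phi> (r ^ n *\<^sub>R x) (r ^ n *\<^sub>R y) (r ^ n *\<^sub>R 0)"
      using assms r_gt_1
      by (simp add: add_mem T_scaleR_power flip: scaleR_right_distrib scaleR_diff_right)
  qed
  then show ?thesis by (simp add: algebra_simps)
qed

lemma T_cs:
  assumes "x \<in> A"
  shows "T (cs c x) = cs c (T x)"
proof -
  have "T (cs c x) - cs c (T x) = 0"
  proof (rule defect_eq_0[OF assms zero_mem zero_mem])
    fix n
    have "norm (T (cs c (r ^ n *\<^sub>R x)) - cs c (T (r ^ n *\<^sub>R x))) \<le> \<phi> (r ^ n *\<^sub>R x) 0 0"
      using approx[of "r ^ n *\<^sub>R x" 0 0 c] assms by (simp add: scaleR_mem zero_mem T_zero)
    then show "r ^ n * norm (T (cs c x) - cs c (T x))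
        \<le> \<phi> (r ^ n *\<^sub>R x) (r ^ n *\<^sub>R 0) (r ^ n *\<^sub>R 0)"
      using assms r_gt_1
      by (simp add: cs_mem T_scaleR_power cstar_algebra_cs_scaleR[OF ambient_cstar]
          flip: scaleR_diff_right)
  qed
  then show ?thesis by simp
qed

lemma T_triple:
  assumes "z \<in> A"
  shows "T (z * star z * z) = T z * star (T z) * T z"
proof -
  note star_scaleR = cstar_algebra_star_scaleR[OF ambient_cstar]
  let ?d = "T (z * star z * z) - T z * star (T z) * T z"
  have "?d = 0"
  proof (rule defect_eq_0[OF zero_mem zero_mem assms])
    fix n
    have "(r ^ n *\<^sub>R z) * star (r ^ n *\<^sub>R z) * (r ^ n *\<^sub>R z) = r ^ (n * 3) *\<^sub>R (z * star z * z)"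
      by (simp add: triple_product_scaleR star_scaleR power_mult power3_eq_cube)
    moreover have "T (r ^ n *\<^sub>R z) * star (T (r ^ n *\<^sub>R z)) * T (r ^ n *\<^sub>R z)
        = r ^ (n * 3) *\<^sub>R (T z * star (T z) * T z)"
      by (simp add: assms T_scaleR_power triple_product_scaleR star_scaleR power_mult
          power3_eq_cube)
    moreover have "norm (T ((r ^ n *\<^sub>R z) * star (r ^ n *\<^sub>R z) * (r ^ n *\<^sub>R z))
        - T (r ^ n *\<^sub>R z) * star (T (r ^ n *\<^sub>R z)) * T (r ^ n *\<^sub>R z)) \<le> \<phi> 0 0 (r ^ n *\<^sub>R z)"
      using approx[of 0 0 "r ^ n *\<^sub>R z" 1] assms
      by (simp add: scaleR_mem zero_mem T_zero cstar_algebra_cs_zero[OF ambient_cstar])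
    ultimately have "r ^ (n * 3) * norm ?d \<le> \<phi> 0 0 (r ^ n *\<^sub>R z)"
      using r_gt_1 by (simp add: assms triple_mem T_scaleR_power flip: scaleR_diff_right)
    moreover have "r ^ n * norm ?d \<le> r ^ (n * 3) * norm ?d"
      using r_gt_1 by (intro mult_right_mono power_increasing) auto
    ultimately show "r ^ n * norm ?d \<le> \<phi> (r ^ n *\<^sub>R 0) (r ^ n *\<^sub>R 0) (r ^ n *\<^sub>R z)"
      by simp
  qed
  then show ?thesis by simp
qed

end

theorem proposition2p1:
  fixes cs :: "complex \<Rightarrow> 'a::{real_normed_algebra,banach} \<Rightarrow> 'a"
    and star :: "'a \<Rightarrow> 'a"
    and A :: "'a set"
    and r :: real
    and T :: "'a \<Rightarrow> 'a"
    and \<phi> :: "'a \<Rightarrow> 'a \<Rightarrow> 'a \<Rightarrow> real"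
  assumes JA: "jstar_algebra cs star A"
    and r: "r > 1"
    and TA: "\<forall>x\<in>A. T x \<in> A"
    and hom_r: "\<forall>x\<in>A. T (scaleR r x) = scaleR r (T x)"
    and phi_nonneg: "\<forall>x\<in>A. \<forall>y\<in>A. \<forall>z\<in>A. \<phi> x y z \<ge> 0"
    and phi_lim: "\<forall>x\<in>A. \<forall>y\<in>A. \<forall>z\<in>A.
         (\<lambda>n. \<phi> (scaleR (r ^ n) x) (scaleR (r ^ n) y) (scaleR (r ^ n) z) / r ^ n)
           \<longlonglongrightarrow> 0"
    and approx: "\<forall>c. \<forall>x\<in>A. \<forall>y\<in>A. \<forall>z\<in>A.
         norm (T (cs c x + y + z * star z * z) - cs c (T x) - T y - T z * star (T z) * T z)
           \<le> \<phi> x y z"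
  shows "jstar_hom cs star A A T"
proof -
  interpret jstar_approx_hom cs star A r T \<phi>
    using JA r hom_r phi_lim approx by unfold_locales blast+
  show ?thesis
    unfolding jstar_hom_def using TA T_add T_cs T_triple by blast
qed

end
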